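(* Define $g(1)=1$, $g(2^k-1)=(-1)^k$ for every integer $k>1$, and $g(n)=0$ for all other integers $n\ge 0$. Let $r(n)$ be the Golay–Rudin–Shapiro sequence, defined by $r(0)=1$, $r(2n)=r(n)$, $r(2n+1)=(-1)^n r(n)$ for $n\ge 0$. Then for all $n\ge 0$, $$\det\left(g(i+j+1)\right)_{i,j=0}^{n-1}=r(n),$$ where the determinant of the empty ($n=0$) matrix is $1$.
   Context: Equivalently, $r(n)=(-1)^{\rho(n)}$ where $\rho(n)$ is the number of (possibly overlapping) pairs of adjacent digits $11$ in the binary expansion of $n$. *)

theory Defs
  imports "Jordan_Normal_Form.Determinant"
begin

definition g :: "nat \<Rightarrow> int" where
  "g n = (if n = 1 then 1
          else if (\<exists>k::nat. 1 < k \<and> n = 2 ^ k - 1)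
               then (-1) ^ (THE k::nat. 1 < k \<and> n = 2 ^ k - 1)
               else 0)"

fun rs :: "nat \<Rightarrow> int" where
  "rs n = (if n = 0 then 1
           else if even n then rs (n div 2)
           else (-1) ^ (n div 2) * rs (n div 2))"

declare rs.simps [simp del]

end

theory Submission
  imports Defs
begin

text \<open>
  Let \<open>2^e \<le> n < 2^(e+1)\<close> and \<open>m = 2^(e+1) - 1 - n\<close>. The entry \<open>g (i + j + 1)\<close> of the
  Hankel matrix \<open>H\<^sub>n\<close> vanishes unless \<open>i + j + 2\<close> is a power of two, and as soon as one
  index is at least \<open>2^e - 1\<close> the only available power is \<open>2^(e+1)\<close>. Hence every nonzero
  term of the Leibniz expansion of \<open>det H\<^sub>n\<close> maps each row \<open>i \<ge> m\<close> to the column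
  \<open>2^(e+1) - 2 - i\<close>, i.e. it is a permutation of \<open>{0..<m}\<close> composed with the reversal of
  \<open>{m..n-1}\<close>. This gives \<open>det H\<^sub>n = (-1)^(n+e+1) det H\<^sub>m\<close>, and since \<open>m\<close> is \<open>n\<close> with
  its \<open>e+1\<close> binary digits complemented, the Rudin--Shapiro sequence satisfies the same
  reflection rule \<open>r(n) = (-1)^(n+e+1) r(m)\<close>; strong induction on \<open>n\<close> concludes.
\<close>

lemma g_nonzero_imp_two_power: "g x \<noteq> 0 \<Longrightarrow> \<exists>j. Suc x = 2 ^ j"
  unfolding g_def by (auto split: if_splits intro: exI[of _ 1])

lemma g_two_power_minus_one: "g (2 ^ Suc e - 1) = (if e = 0 then 1 else (-1) ^ Suc e)"
proof (cases "e = 0")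
  case False
  have two_power_inj: "(2::nat) ^ k - 1 = 2 ^ Suc e - 1 \<longleftrightarrow> k = Suc e" for k
    by (metis Suc_diff_1 pos2 power_inject_exp zero_less_power one_less_numeral_iff semiring_norm(76))
  have "(THE k. 1 < k \<and> 2 ^ Suc e - 1 = (2::nat) ^ k - 1) = Suc e"
    using False two_power_inj by (intro the_equality) auto
  moreover have "2 ^ Suc e - 1 \<noteq> (1::nat)"
    using False two_power_inj[of 1] by auto
  ultimately show ?thesis
    using False unfolding g_def by auto
qed (simp add: g_def)

lemma rs_0 [simp]: "rs 0 = 1"
  by (simp add: rs.simps)

lemma rs_even: "rs (2 * n) = rs n"
  by (cases "n = 0") (simp_all add: rs.simps[of "2 * n"])

lemma rs_odd: "rs (2 * n + 1) = (-1) ^ n * rs n"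
  by (subst rs.simps) simp

lemma rs_reflect:
  "2 ^ e \<le> n \<Longrightarrow> n < 2 ^ Suc e \<Longrightarrow> rs n = (-1) ^ (n + e + 1) * rs (2 ^ Suc e - 1 - n)"
proof (induction e arbitrary: n)
  case 0
  then have "n = 1" by simp
  then show ?case using rs_odd[of 0] by simp
next
  case (Suc e)
  define a where "a = n div 2"
  define a' where "a' = 2 ^ Suc e - 1 - a"
  have a: "2 ^ e \<le> a" "a < 2 ^ Suc e"
    using Suc.prems unfolding a_def by auto
  have "odd (a + a')"
    using a unfolding a'_def by simp
  then have parity: "(-1::int) ^ a' = - ((-1) ^ a)"
    by (auto simp: minus_one_power_iff)
  have IH: "rs a = (-1) ^ (a + e + 1) * rs a'"
    using Suc.IH[OF a] unfolding a'_def .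
  show ?case
  proof (cases "even n")
    case True
    then have n: "n = 2 * a"
      unfolding a_def by simp
    moreover have "2 ^ Suc (Suc e) - 1 - n = 2 * a' + 1"
      using a unfolding n a'_def by simp
    ultimately show ?thesis
      using IH parity by (simp add: rs_even rs_odd[simplified] power_add)
  next
    case False
    then have n: "n = 2 * a + 1"
      unfolding a_def by simp
    moreover have "2 ^ Suc (Suc e) - 1 - n = 2 * a'"
      using a unfolding n a'_def by simp
    ultimately show ?thesis
      using IH by (simp add: rs_even rs_odd[simplified] power_add)
  qed
qed

definition interval_reversal :: "nat \<Rightarrow> nat \<Rightarrow> nat \<Rightarrow> nat" where
  "interval_reversal a b i = (if a \<le> i \<and> i \<le> b then a + b - i else i)"

lemma interval_reversal_involution: "interval_reversal a b (interval_reversal a b i) = i"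
  unfolding interval_reversal_def by auto

lemma interval_reversal_permutes: "interval_reversal a b permutes {a..b}"
proof (rule bij_imp_permutes)
  show "bij_betw (interval_reversal a b) {a..b} {a..b}"
    by (rule bij_betw_byWitness[of _ "interval_reversal a b"])
      (auto simp: interval_reversal_involution, auto simp: interval_reversal_def)
qed (auto simp: interval_reversal_def)

lemma sign_interval_reversal: "sign (interval_reversal a (a + d)) = (-1) ^ ((d + 1) div 2)"
proof (induction d arbitrary: a rule: less_induct)
  case (less d)
  consider "d = 0" | "d = 1" | "d \<ge> 2" by linarith
  then show ?case
  proof cases
    case 1
    then have "interval_reversal a (a + d) = id"
      by (auto simp: interval_reversal_def fun_eq_iff)
    then show ?thesis using 1 by simp
  next
    case 2
    then have "interval_reversal a (a + d) = transpose a (a + 1)"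
      by (auto simp: interval_reversal_def transpose_def)
    then show ?thesis using 2 by (simp add: sign_swap_id)
  next
    case 3
    then have peel: "interval_reversal a (a + d) =
        transpose a (a + d) \<circ> interval_reversal (a + 1) (a + 1 + (d - 2))"
      by (auto simp: interval_reversal_def fun_eq_iff transpose_def)
    have "permutation (interval_reversal (a + 1) (a + 1 + (d - 2)))"
      using interval_reversal_permutes permutation_permutes by blast
    then have "sign (interval_reversal a (a + d)) = - sign (interval_reversal (a + 1) (a + 1 + (d - 2)))"
      unfolding peel using 3 by (simp add: sign_compose permutation_swap_id sign_swap_id)
    also have "\<dots> = (-1) ^ ((d + 1) div 2)"
    proof -
      have "(d + 1) div 2 = Suc ((d - 2 + 1) div 2)" using 3 by presburger
      then show ?thesis using less.IH[of "d - 2" "a + 1"] 3 by simp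
    qed
    finally show ?thesis .
  qed
qed

lemma two_power_between:
  assumes "2 ^ e < (2::nat) ^ k" "2 ^ k < (2::nat) ^ (e + 2)"
  shows "k = Suc e"
  using power_less_imp_less_exp[OF _ assms(1)] power_less_imp_less_exp[OF _ assms(2)] by simp

lemma hankel_entry_nonzero_imp_antidiagonal:
  assumes supp: "\<And>x. a x \<noteq> 0 \<Longrightarrow> \<exists>k. Suc x = 2 ^ k"
    and "n < 2 ^ Suc e" "i < n" "j < n" "2 ^ e \<le> Suc i" "a (i + j + 1) \<noteq> 0"
  shows "i + j + 2 = 2 ^ Suc e"
proof -
  obtain k where k: "i + j + 2 = 2 ^ k"
    using supp[OF assms(6)] by auto
  have "k = Suc e"
  proof (rule two_power_between)
    show "2 ^ e < (2::nat) ^ k" using assms(5) k by linarith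
    show "(2::nat) ^ k < 2 ^ (e + 2)" using assms(2-4) k by simp
  qed
  with k show ?thesis by simp
qed

lemma hankel_nonzero_term_reverses_tail:
  assumes supp: "\<And>x. a x \<noteq> 0 \<Longrightarrow> \<exists>k. Suc x = 2 ^ k"
    and n: "n < 2 ^ Suc e" and p: "p permutes {0..<n}"
    and nz: "\<And>i. i < n \<Longrightarrow> a (i + p i + 1) \<noteq> 0"
    and i: "2 ^ Suc e - 1 - n \<le> i" "i < n"
  shows "i + p i + 2 = 2 ^ Suc e"
proof (cases "2 ^ e \<le> Suc i")
  case True
  have "p i < n" using permutes_in_image[OF p] i by simp
  then show ?thesis
    using hankel_entry_nonzero_imp_antidiagonal[where a=a, OF supp n i(2) _ True nz[OF i(2)]] by simp
next
  case False
  \<comment> \<open>row \<open>i\<close> is too short to force its entry, but column \<open>2^(e+1) - 2 - i\<close> is not\<close>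
  define c where "c = 2 ^ Suc e - 2 - i"
  have c: "c < n" "2 ^ e \<le> Suc c"
    using False i unfolding c_def by auto
  obtain r where r: "p r = c" "r < n"
    using permutes_surj[OF p] permutes_not_in[OF p] c(1) by (metis atLeastLessThan_iff surj_def zero_le)
  have "c + r + 2 = 2 ^ Suc e"
    using hankel_entry_nonzero_imp_antidiagonal[where a=a, OF supp n c(1) r(2) c(2)] nz[OF r(2)] r(1)
    by (simp add: add.commute)
  then have "r = i" using False unfolding c_def by simp
  with r c_def False show ?thesis by simp
qed

lemma hankel_nonzero_term_compose_reversal:
  assumes supp: "\<And>x. a x \<noteq> 0 \<Longrightarrow> \<exists>k. Suc x = 2 ^ k"
    and n: "2 ^ e \<le> n" "n < 2 ^ Suc e" and p: "p permutes {0..<n}"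
    and nz: "\<And>i. i < n \<Longrightarrow> a (i + p i + 1) \<noteq> 0"
  defines "m \<equiv> 2 ^ Suc e - 1 - n"
  shows "p \<circ> interval_reversal m (n - 1) permutes {0..<m}"
proof (rule permutes_superset)
  have "0 < n"
    using n(1) less_le_trans[OF zero_less_power[of 2 e]] by simp
  then have "interval_reversal m (n - 1) permutes {0..<n}"
    by (intro permutes_subset[OF interval_reversal_permutes]) auto
  then show "p \<circ> interval_reversal m (n - 1) permutes {0..<n}"
    using p by (rule permutes_compose)
next
  fix i assume i: "i \<in> {0..<n} - {0..<m}"
  define j where "j = m + (n - 1) - i"
  have j: "interval_reversal m (n - 1) i = j" "m \<le> j" "j < n"
    using i unfolding j_def interval_reversal_def by auto
  have "j + p j + 2 = 2 ^ Suc e"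
    using hankel_nonzero_term_reverses_tail[where a=a, OF supp n(2) p nz] j unfolding m_def by blast
  moreover have "m + (n - 1) + 2 = 2 ^ Suc e"
    using n unfolding m_def by simp
  ultimately show "(p \<circ> interval_reversal m (n - 1)) i = i"
    using j(1) i unfolding j_def by auto
qed

lemma prod_compose_interval_reversal:
  fixes f :: "nat \<Rightarrow> nat \<Rightarrow> 'a::comm_monoid_mult"
  assumes "m \<le> n" and q: "q permutes {0..<m}"
  shows "(\<Prod>i = 0..<n. f i ((q \<circ> interval_reversal m (n - 1)) i))
       = (\<Prod>i = 0..<m. f i (q i)) * (\<Prod>i = m..<n. f i (m + n - 1 - i))"
proof -
  let ?h = "\<lambda>i. f i ((q \<circ> interval_reversal m (n - 1)) i)"
  have "prod ?h {0..<n} = prod ?h {0..<m} * prod ?h {m..<n}"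
    using prod.atLeastLessThan_concat[of 0 m n ?h] assms(1) by simp
  moreover have "(\<Prod>i = 0..<m. f i ((q \<circ> interval_reversal m (n - 1)) i)) = (\<Prod>i = 0..<m. f i (q i))"
    by (rule prod.cong) (auto simp: interval_reversal_def)
  moreover have "(\<Prod>i = m..<n. f i ((q \<circ> interval_reversal m (n - 1)) i))
      = (\<Prod>i = m..<n. f i (m + n - 1 - i))"
    by (rule prod.cong) (auto simp: interval_reversal_def permutes_not_in[OF q])
  ultimately show ?thesis
    by simp
qed

lemma sum_permutations_reindex_involution:
  fixes T :: "(nat \<Rightarrow> nat) \<Rightarrow> 'a::comm_monoid_add"
  assumes \<tau>: "\<tau> permutes {0..<n}" "\<tau> \<circ> \<tau> = id" and "m \<le> n"
    and concentrated: "\<And>p. p permutes {0..<n} \<Longrightarrow> T p \<noteq> 0 \<Longrightarrow> p \<circ> \<tau> permutes {0..<m}"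
  shows "(\<Sum>p \<in> {p. p permutes {0..<n}}. T p) = (\<Sum>q \<in> {q. q permutes {0..<m}}. T (q \<circ> \<tau>))"
proof -
  let ?P = "\<lambda>k. {p. p permutes {0..<k}}" and ?ext = "\<lambda>q. q \<circ> \<tau>"
  have ext_ext: "?ext (?ext q) = q" for q
    by (simp add: comp_assoc \<tau>(2))
  have "sum T (?P n) = sum T (?ext ` ?P m)"
  proof (rule sum.mono_neutral_right)
    show "finite (?P n)"
      by (simp add: finite_permutations)
    have "q \<circ> \<tau> permutes {0..<n}" if "q permutes {0..<m}" for q
      using \<open>m \<le> n\<close> by (intro permutes_compose[OF \<tau>(1)] permutes_subset[OF that]) auto
    then show "?ext ` ?P m \<subseteq> ?P n"
      by auto
    show "\<forall>p \<in> ?P n - ?ext ` ?P m. T p = 0"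
      using concentrated ext_ext by (metis (mono_tags, lifting) DiffE image_eqI mem_Collect_eq)
  qed
  also have "\<dots> = sum (T \<circ> ?ext) (?P m)"
    by (rule sum.reindex) (metis inj_on_inverseI ext_ext)
  finally show ?thesis
    by simp
qed

lemma hankel_term_compose_interval_reversal:
  fixes a :: "nat \<Rightarrow> 'a::comm_ring_1"
  assumes "m < n" and q: "q permutes {0..<m}"
  defines "\<tau> \<equiv> interval_reversal m (n - 1)"
  shows "signof (q \<circ> \<tau>) * (\<Prod>i = 0..<n. a (i + (q \<circ> \<tau>) i + 1))
       = (-1) ^ ((n - m) div 2) * a (m + n) ^ (n - m) * (signof q * (\<Prod>i = 0..<m. a (i + q i + 1)))"
proof -
  have \<tau>: "\<tau> permutes {0..<n}"
    unfolding \<tau>_def using \<open>m < n\<close> by (intro permutes_subset[OF interval_reversal_permutes]) auto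
  have "m + (n - 1 - m) = n - 1" "n - 1 - m + 1 = n - m"
    using \<open>m < n\<close> by auto
  then have "sign \<tau> = (-1::int) ^ ((n - m) div 2)"
    using sign_interval_reversal[of m "n - 1 - m"] unfolding \<tau>_def by metis
  moreover have "(\<Prod>i = m..<n. a (i + (m + n - 1 - i) + 1)) = (\<Prod>i = m..<n. a (m + n))"
    by (rule prod.cong) auto
  moreover have "(\<Prod>i = 0..<n. a (i + (q \<circ> \<tau>) i + 1))
      = (\<Prod>i = 0..<m. a (i + q i + 1)) * (\<Prod>i = m..<n. a (i + (m + n - 1 - i) + 1))"
    unfolding \<tau>_def using \<open>m < n\<close> by (intro prod_compose_interval_reversal q) simp
  ultimately show ?thesis
    unfolding signof_compose[OF q \<tau>] by (simp add: mult_ac)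
qed

lemma det_hankel_reduce:
  fixes a :: "nat \<Rightarrow> 'a::comm_ring_1"
  assumes supp: "\<And>x. a x \<noteq> 0 \<Longrightarrow> \<exists>k. Suc x = 2 ^ k"
    and n: "2 ^ e \<le> n" "n < 2 ^ Suc e"
  defines "m \<equiv> 2 ^ Suc e - 1 - n"
  shows "det (mat n n (\<lambda>(i, j). a (i + j + 1)))
       = (-1) ^ (n - 2 ^ e) * a (2 ^ Suc e - 1) ^ (n - m) * det (mat m m (\<lambda>(i, j). a (i + j + 1)))"
proof -
  define \<tau> where "\<tau> = interval_reversal m (n - 1)"
  define T where "T k p = signof p * (\<Prod>i = 0..<k. a (i + p i + 1))" for k p
  define c where "c = (-1) ^ (n - 2 ^ e) * a (2 ^ Suc e - 1) ^ (n - m)"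
  have det_expand: "det (mat k k (\<lambda>(i, j). a (i + j + 1))) = (\<Sum>p \<in> {p. p permutes {0..<k}}. T k p)" for k
    unfolding T_def
    by (subst det_def'[of _ k]) (auto intro!: sum.cong prod.cong simp: permutes_in_image)
  have "(2::nat) ^ Suc e = 2 * 2 ^ e"
    by simp
  then have mn: "m < n" "m + n = 2 ^ Suc e - 1" "(n - m) div 2 = n - 2 ^ e"
    using n unfolding m_def by auto
  have "(\<Sum>p \<in> {p. p permutes {0..<n}}. T n p) = (\<Sum>q \<in> {q. q permutes {0..<m}}. T n (q \<circ> \<tau>))"
  proof (rule sum_permutations_reindex_involution)
    show "\<tau> permutes {0..<n}"
      unfolding \<tau>_def using mn(1) by (intro permutes_subset[OF interval_reversal_permutes]) auto
    show "\<tau> \<circ> \<tau> = id"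
      unfolding \<tau>_def by (auto simp: fun_eq_iff interval_reversal_involution)
    show "p \<circ> \<tau> permutes {0..<m}" if p: "p permutes {0..<n}" and "T n p \<noteq> 0" for p
    proof -
      have "a (i + p i + 1) \<noteq> 0" if "i < n" for i
      proof
        assume "a (i + p i + 1) = 0"
        then have "(\<Prod>i = 0..<n. a (i + p i + 1)) = 0"
          using \<open>i < n\<close> by (intro prod_zero) auto
        with \<open>T n p \<noteq> 0\<close> show False
          unfolding T_def by simp
      qed
      then show ?thesis
        using hankel_nonzero_term_compose_reversal[OF supp n p] unfolding \<tau>_def m_def by blast
    qed
  qed (use mn in simp)
  also have "\<dots> = c * (\<Sum>q \<in> {q. q permutes {0..<m}}. T m q)"
  proof -
    have "T n (q \<circ> \<tau>) = c * T m q" if "q permutes {0..<m}" for q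
      unfolding T_def c_def \<tau>_def hankel_term_compose_interval_reversal[OF mn(1) that] mn(2,3) ..
    then show ?thesis
      unfolding sum_distrib_left by (intro sum.cong) auto
  qed
  finally show ?thesis
    unfolding det_expand c_def .
qed

lemma det_hankel_g_reduce:
  assumes n: "2 ^ e \<le> n" "n < 2 ^ Suc e"
  shows "det (mat n n (\<lambda>(i, j). g (i + j + 1)))
       = (-1) ^ (n + e + 1) * det (mat (2 ^ Suc e - 1 - n) (2 ^ Suc e - 1 - n) (\<lambda>(i, j). g (i + j + 1)))"
proof -
  define k where "k = n - 2 ^ e"
  have nk: "n = 2 ^ e + k" "n - (2 ^ Suc e - 1 - n) = 2 * k + 1"
    using n unfolding k_def by auto
  have "(-1) ^ k * g (2 ^ Suc e - 1) ^ (2 * k + 1) = ((-1) ^ (n + e + 1) :: int)"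
  proof (cases "e = 0")
    case True
    then show ?thesis
      using nk(1) g_two_power_minus_one[of 0] by simp
  next
    case False
    then have "g (2 ^ Suc e - 1) = (-1) ^ Suc e"
      by (simp only: g_two_power_minus_one if_False)
    then have "(-1) ^ k * g (2 ^ Suc e - 1) ^ (2 * k + 1) = ((-1) ^ (k + e + 1) :: int)"
      by (simp add: power_mult[symmetric] power_add)
    then show ?thesis
      using False unfolding nk(1) by (simp add: power_add)
  qed
  then show ?thesis
    using det_hankel_reduce[where a = g, OF g_nonzero_imp_two_power n] unfolding nk(2) k_def by simp
qed

theorem theorem5p11:
  fixes n :: nat
  shows "det (mat n n (\<lambda>(i, j). g (i + j + 1))) = rs n"
proof (induction n rule: less_induct)
  case (less n)
  show ?case
  proof (cases "n = 0")
    case True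
    then show ?thesis by (simp add: det_def)
  next
    case False
    then obtain e where e: "2 ^ e \<le> n" "n < 2 ^ Suc e"
      using ex_power_ivl1[of 2 n] by auto
    then have "2 ^ Suc e - 1 - n < n"
      by auto
    then show ?thesis
      using det_hankel_g_reduce[OF e] rs_reflect[OF e] less.IH by simp
  qed
qed

end
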